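(* Let $0<p_1\le p_0\le\infty$ and $0<q_0<q_1\le\infty$, with $(p_0,p_1)\notin\{\infty\}\times(0,\infty)$. Then for every integer $A\ge0$ the embedding $$\ell^{q_0}\big(2^{-j/p_0}\cdot\ell^{p_0}\{1,\dots,2^j\}\big)_{j=A}^\infty\hookrightarrow\ell^{q_1}\big(2^{-j/p_1}\cdot\ell^{p_1}\{1,\dots,2^j\}\big)_{j=A}^\infty$$ is not finitely strictly singular.
   Context: For quasi-normed spaces $X_j$ and $q\in(0,\infty]$, $\ell^q(X_j)_{j=A}^\infty$ is the space of sequences $x=(x_j)_{j\ge A}$, $x_j\in X_j$, with $\|x\|=(\sum_j\|x_j\|_{X_j}^q)^{1/q}<\infty$ (supremum if $q=\infty$). For $\lambda>0$, $\lambda\cdot\ell^p\{1,\dots,N\}$ denotes $\mathbb{R}^N$ with quasi-norm $\lambda\|y\|_{\ell^p}$ (with the convention $2^{-j/\infty}=1$). Bernstein numbers: $b_n(T)=\sup\{\inf_{x\in X_n,\|x\|=1}\|Tx\|:\dim X_n=n\}$; $T$ is finitely strictly singular if $b_n(T)\to0$. *)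

theory Defs
  imports "HOL-Analysis.Analysis"
begin

text \<open>Exponents p, q range over (0, \<infinity>]; they are represented as extended reals.
  Elements of the mixed sequence spaces are represented as x :: nat \<Rightarrow> nat \<Rightarrow> real,
  where x j is the j-th block (a vector in R^(2^j), coordinates indexed by 0..<2^j).\<close>

definition lp_norm :: "ereal \<Rightarrow> nat \<Rightarrow> (nat \<Rightarrow> real) \<Rightarrow> real" where
  "lp_norm p N y =
     (if p = \<infinity> then Max (insert 0 ((\<lambda>i. \<bar>y i\<bar>) ` {..<N}))
      else (\<Sum>i<N. \<bar>y i\<bar> powr real_of_ereal p) powr (1 / real_of_ereal p))"

definition block_norm :: "ereal \<Rightarrow> nat \<Rightarrow> (nat \<Rightarrow> real) \<Rightarrow> real" where
  "block_norm p j y =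
     (if p = \<infinity> then 1 else 2 powr (- real j / real_of_ereal p)) * lp_norm p (2 ^ j) y"

definition mixed_space :: "ereal \<Rightarrow> ereal \<Rightarrow> nat \<Rightarrow> (nat \<Rightarrow> nat \<Rightarrow> real) set" where
  "mixed_space p q A =
     {x. (\<forall>j i. (j < A \<or> 2 ^ j \<le> i) \<longrightarrow> x j i = 0) \<and>
         (if q = \<infinity> then bdd_above {block_norm p j (x j) | j. A \<le> j}
          else summable (\<lambda>j. block_norm p (j + A) (x (j + A)) powr real_of_ereal q))}"

definition mixed_norm :: "ereal \<Rightarrow> ereal \<Rightarrow> nat \<Rightarrow> (nat \<Rightarrow> nat \<Rightarrow> real) \<Rightarrow> ereal" where
  "mixed_norm p q A x =
     (if x \<in> mixed_space p q A then
        ereal (if q = \<infinity> then Sup {block_norm p j (x j) | j. A \<le> j}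
               else (\<Sum>j. block_norm p (j + A) (x (j + A)) powr real_of_ereal q)
                      powr (1 / real_of_ereal q))
      else \<infinity>)"

definition lin_subspace_dim :: "(nat \<Rightarrow> nat \<Rightarrow> real) set \<Rightarrow> nat \<Rightarrow> bool" where
  "lin_subspace_dim X n \<longleftrightarrow>
     (\<exists>v :: nat \<Rightarrow> nat \<Rightarrow> nat \<Rightarrow> real.
        (\<forall>c. (\<forall>j i. (\<Sum>k<n. c k * v k j i) = 0) \<longrightarrow> (\<forall>k<n. c k = 0)) \<and>
        X = {(\<lambda>j i. \<Sum>k<n. c k * v k j i) | c. True})"

definition bernstein ::
  "(nat \<Rightarrow> nat \<Rightarrow> real) set \<Rightarrow> ((nat \<Rightarrow> nat \<Rightarrow> real) \<Rightarrow> ereal) \<Rightarrow> ('b \<Rightarrow> ereal)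
     \<Rightarrow> ((nat \<Rightarrow> nat \<Rightarrow> real) \<Rightarrow> 'b) \<Rightarrow> nat \<Rightarrow> ereal" where
  "bernstein D nD nR T n =
     (SUP X \<in> {X. X \<subseteq> D \<and> lin_subspace_dim X n}. INF x \<in> {x \<in> X. nD x = 1}. nR (T x))"

definition finitely_strictly_singular ::
  "(nat \<Rightarrow> nat \<Rightarrow> real) set \<Rightarrow> ((nat \<Rightarrow> nat \<Rightarrow> real) \<Rightarrow> ereal) \<Rightarrow> ('b \<Rightarrow> ereal)
     \<Rightarrow> ((nat \<Rightarrow> nat \<Rightarrow> real) \<Rightarrow> 'b) \<Rightarrow> bool" where
  "finitely_strictly_singular D nD nR T \<longleftrightarrow> (bernstein D nD nR T \<longlonglongrightarrow> 0)"

end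

theory Submission
  imports Defs "HOL-Probability.Hoeffding"
begin

text \<open>Normalised as in the definition of the spaces, the block quasi-norm
  2^(-J/p) \<cdot> l^p{1,...,2^J} is the L^p norm for the uniform probability measure on 2^J points.
  On these points the first J Rademacher functions span a J-dimensional space on which, by
  Khintchine's inequality, every L^p norm with 0 < p < \<infinity> is equivalent to the l^2 norm of the
  coefficients, with constants independent of J. A vector supported in a single block has mixed
  norm equal to its block norm, whatever q is. Hence for every n the Rademacher sums placed in
  block A + n form an n-dimensional subspace on which the embedding is bounded below by a
  constant independent of n, so the Bernstein numbers stay away from zero. When p0 = p1 (the
  only case allowed with p0 = \<infinity>) the block norms coincide and the bound is 1.\<close>

definition rademacher :: "nat \<Rightarrow> nat \<Rightarrow> real" where
  "rademacher k i = (if odd (i div 2^k) then -1 else 1)"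

definition rademacher_sum :: "nat \<Rightarrow> (nat \<Rightarrow> real) \<Rightarrow> nat \<Rightarrow> real" where
  "rademacher_sum J c i = (\<Sum>k<J. c k * rademacher k i)"

lemma div_pow2_add_pow2:
  assumes "k \<le> J"
  shows "((i::nat) + 2^J) div 2^k = i div 2^k + 2^(J-k)"
proof -
  have "2^J = (2::nat)^k * 2^(J-k)" using assms by (simp add: power_add[symmetric])
  then show ?thesis by simp
qed

lemma sum_lessThan_double_pow2:
  "(\<Sum>i<(2::nat)^Suc J. F i) = (\<Sum>i<2^J. F i) + (\<Sum>i<2^J. F (i + 2^J))"
  for F :: "nat \<Rightarrow> real"
proof -
  have "(\<Sum>i<2^Suc J. F i) = sum F {0..<2^J} + sum F {2^J..<2^J+2^J}"
    by (simp add: mult_2 sum.atLeastLessThan_concat lessThan_atLeast0)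
  also have "sum F {2^J..<2^J+2^J} = sum (\<lambda>i. F (i + 2^J)) {0..<2^J}"
    using sum.shift_bounds_nat_ivl[of F 0 "2^J" "2^J"] by simp
  finally show ?thesis by (simp add: lessThan_atLeast0)
qed

text \<open>Summing over i < 2^J is summing over all J-tuples of binary digits of i, so a product of
  functions of single digits factorises.\<close>
lemma sum_prod_binary_digits:
  fixes G :: "nat \<Rightarrow> bool \<Rightarrow> real"
  shows "(\<Sum>i<(2::nat)^J. \<Prod>k<J. G k (odd (i div 2^k))) = (\<Prod>k<J. G k False + G k True)"
proof (induction J)
  case 0
  then show ?case by simp
next
  case (Suc J)
  define h where "h i = (\<Prod>k<J. G k (odd (i div 2^k)))" for i :: nat
  have low: "(\<Prod>k<Suc J. G k (odd (i div 2^k))) = h i * G J False" if "i < 2^J" for i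
    using that by (simp add: h_def)
  have high: "(\<Prod>k<Suc J. G k (odd ((i + 2^J) div 2^k))) = h i * G J True" if "i < 2^J" for i
  proof -
    have "(\<Prod>k<J. G k (odd ((i + 2^J) div 2^k))) = h i"
      unfolding h_def by (intro prod.cong refl) (simp add: div_pow2_add_pow2)
    moreover have "(i + 2^J) div 2^J = 1" using that by simp
    ultimately show ?thesis by simp
  qed
  have "(\<Sum>i<(2::nat)^Suc J. \<Prod>k<Suc J. G k (odd (i div 2^k)))
      = (\<Sum>i<2^J. h i * G J False) + (\<Sum>i<2^J. h i * G J True)"
    unfolding sum_lessThan_double_pow2 using low high by (intro arg_cong2[where f="(+)"] sum.cong) auto
  also have "\<dots> = (\<Sum>i<2^J. h i) * (G J False + G J True)"
    by (simp add: sum_distrib_right distrib_left)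
  finally show ?case using Suc by (simp add: h_def)
qed

lemma sum_rademacher_mult:
  assumes "k < J" "l < J"
  shows "(\<Sum>i<(2::nat)^J. rademacher k i * rademacher l i) = (if k = l then 2^J else 0)"
proof -
  define sign :: "bool \<Rightarrow> real" where "sign b = (if b then -1 else 1)" for b
  have rademacher_sign: "rademacher m i = sign (odd (i div 2^m))" for m i
    by (simp add: rademacher_def sign_def)
  define G where "G m b = (if m = k then sign b else 1) * (if m = l then sign b else 1)" for m b
  have "rademacher k i * rademacher l i = (\<Prod>m<J. G m (odd (i div 2^m)))" for i
    using assms by (simp add: G_def prod.distrib rademacher_sign)
  then have "(\<Sum>i<(2::nat)^J. rademacher k i * rademacher l i) = (\<Prod>m<J. G m False + G m True)"
    by (simp add: sum_prod_binary_digits)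
  also have "\<dots> = (if k = l then 2^J else 0)"
  proof (cases "k = l")
    case True
    then have "G m False + G m True = 2" for m by (simp add: G_def sign_def)
    then show ?thesis using True by simp
  next
    case False
    then have "G k False + G k True = 0" by (simp add: G_def sign_def)
    then show ?thesis using False assms by (metis finite_lessThan lessThan_iff prod_zero_iff)
  qed
  finally show ?thesis .
qed

lemma sum_rademacher_sum_squared:
  "(\<Sum>i<(2::nat)^J. (rademacher_sum J c i)^2) = 2^J * (\<Sum>k<J. (c k)^2)"
proof -
  have "(\<Sum>i<(2::nat)^J. (rademacher_sum J c i)^2)
      = (\<Sum>i<(2::nat)^J. \<Sum>k<J. \<Sum>l<J. c k * c l * (rademacher k i * rademacher l i))"
    by (simp add: rademacher_sum_def power2_eq_square sum_product algebra_simps)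
  also have "\<dots> = (\<Sum>k<J. \<Sum>l<J. c k * c l * (\<Sum>i<(2::nat)^J. rademacher k i * rademacher l i))"
    by (subst sum.swap, rule sum.cong[OF refl], subst sum.swap, simp add: sum_distrib_left)
  also have "\<dots> = (\<Sum>k<J. \<Sum>l<J. if k = l then 2^J * (c k)^2 else 0)"
    by (intro sum.cong refl) (simp add: sum_rademacher_mult power2_eq_square)
  also have "\<dots> = 2^J * (\<Sum>k<J. (c k)^2)"
    by (simp add: sum_distrib_left)
  finally show ?thesis .
qed

lemma rademacher_sum_eq_zero:
  assumes "(\<Sum>k<J. (c k)^2) = 0"
  shows "rademacher_sum J c i = 0"
proof -
  have "\<forall>k\<in>{..<J}. c k = 0" using assms by (subst (asm) sum_nonneg_eq_0_iff) auto
  then show ?thesis by (simp add: rademacher_sum_def)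
qed

lemma rademacher_sum_vanishes_imp_coeffs_zero:
  assumes "\<And>i. i < 2^J \<Longrightarrow> rademacher_sum J c i = 0" "k < J"
  shows "c k = 0"
proof -
  have "2^J * (\<Sum>k<J. (c k)^2) = (0::real)"
    using assms(1) by (simp flip: sum_rademacher_sum_squared)
  then have "\<forall>k\<in>{..<J}. (c k)^2 = 0" by (simp add: sum_nonneg_eq_0_iff)
  then show ?thesis using assms(2) by simp
qed

lemma sum_exp_rademacher_sum:
  "(\<Sum>i<(2::nat)^J. exp (t * rademacher_sum J c i)) = (\<Prod>k<J. exp (t * c k) + exp (- (t * c k)))"
proof -
  define G where "G k b = exp (t * c k * (if b then -1 else 1))" for k b
  have "exp (t * rademacher_sum J c i) = (\<Prod>k<J. G k (odd (i div 2^k)))" for i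
    by (simp add: G_def rademacher_sum_def rademacher_def exp_sum[symmetric] sum_distrib_left
        mult.assoc)
  then have "(\<Sum>i<(2::nat)^J. exp (t * rademacher_sum J c i)) = (\<Prod>k<J. G k False + G k True)"
    by (simp add: sum_prod_binary_digits)
  then show ?thesis by (simp add: G_def)
qed

lemma exp_add_exp_minus_le: "exp (u::real) + exp (-u) \<le> 2 * exp (u^2 / 2)"
proof -
  define a where "a = \<bar>u\<bar>"
  have "a \<ge> 0" by (simp add: a_def)
  have "-(2*a) * (1/2) + ln (1 + (1/2) * (exp (2*a) - 1)) \<le> (2*a)^2 / 8"
    using Hoeffdings_lemma_aux[of "2*a" "1/2"] \<open>a \<ge> 0\<close> by simp
  then have "ln ((1 + exp (2*a)) / 2) \<le> a + a^2/2"
    by (simp add: field_simps power2_eq_square)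
  then have "(1 + exp (2*a)) / 2 \<le> exp (a + a^2/2)"
    by (metis exp_le_cancel_iff exp_ln add_pos_pos zero_less_one exp_gt_zero half_gt_zero)
  then have "exp (-a) * ((1 + exp (2*a)) / 2) \<le> exp (-a) * exp (a + a^2/2)"
    by (intro mult_left_mono) auto
  then have "exp a + exp (-a) \<le> 2 * exp (a^2/2)"
    by (simp add: field_simps exp_add[symmetric] exp_minus_inverse)
  moreover have "exp u + exp (-u) = exp a + exp (-a)" by (auto simp: a_def abs_if)
  ultimately show ?thesis by (simp add: a_def)
qed

lemma sum_exp_rademacher_sum_le:
  "(\<Sum>i<(2::nat)^J. exp (t * rademacher_sum J c i)) \<le> 2^J * exp (t^2 * (\<Sum>k<J. (c k)^2) / 2)"
proof -
  have "(\<Prod>k<J. exp (t * c k) + exp (- (t * c k))) \<le> (\<Prod>k<J. 2 * exp ((t * c k)^2 / 2))"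
    by (intro prod_mono) (auto simp: exp_add_exp_minus_le add_nonneg_nonneg)
  also have "\<dots> = 2^J * exp (\<Sum>k<J. (t * c k)^2 / 2)"
    by (simp add: prod.distrib exp_sum)
  also have "(\<Sum>k<J. (t * c k)^2 / 2) = t^2 * (\<Sum>k<J. (c k)^2) / 2"
    by (simp add: sum_divide_distrib sum_distrib_left power_mult_distrib)
  finally show ?thesis by (simp add: sum_exp_rademacher_sum)
qed

lemma powr_le_const_mult_exp:
  fixes p :: real
  assumes "p > 0"
  obtains K where "K > 0" "\<And>x. x \<ge> 0 \<Longrightarrow> x powr p \<le> K * exp x"
proof -
  define m where "m = nat \<lceil>p\<rceil> + 1"
  have "m > 0" "p \<le> real m" unfolding m_def using assms by (auto, linarith)
  define K :: real where "K = real m ^ m"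
  have "K \<ge> 1" unfolding K_def using \<open>m > 0\<close> by (simp add: one_le_power)
  have bound: "x powr p \<le> K * exp x" if "x \<ge> 0" for x
  proof (cases "x \<le> 1")
    case True
    have "x powr p \<le> 1" using powr_mono2[of p x 1] True that assms by simp
    also have "1 \<le> exp x" using that by simp
    also have "exp x \<le> K * exp x" using \<open>K \<ge> 1\<close> by simp
    finally show ?thesis .
  next
    case False
    have "x powr p \<le> x ^ m"
      using False \<open>p \<le> real m\<close> powr_mono[of p "real m" x] by (simp add: powr_realpow)
    also have "x ^ m = K * (x / real m) ^ m" unfolding K_def using \<open>m > 0\<close> by (simp add: power_divide)
    also have "(x / real m) ^ m \<le> (1 + x / real m) ^ m"
      using that by (intro power_mono) auto
    also have "\<dots> \<le> exp x" using that \<open>m > 0\<close> by (intro exp_ge_one_plus_x_over_n_power_n) auto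
    finally show ?thesis using \<open>K \<ge> 1\<close> by simp
  qed
  show ?thesis by (rule that[of K]) (use \<open>K \<ge> 1\<close> bound in auto)
qed

text \<open>Khintchine's upper inequality, from the subgaussian bound on exponential moments.\<close>
lemma khintchine_upper:
  fixes p :: real
  assumes "p > 0"
  obtains C where "C > 0"
    "\<And>J c. (\<Sum>i<(2::nat)^J. \<bar>rademacher_sum J c i\<bar> powr p)
              \<le> C * 2^J * sqrt (\<Sum>k<J. (c k)^2) powr p"
proof -
  obtain K where K: "K > 0" "\<And>x. x \<ge> 0 \<Longrightarrow> x powr p \<le> K * exp x"
    using powr_le_const_mult_exp[OF assms] by blast
  define C where "C = K * 2 * exp (1/2)"
  have "(\<Sum>i<(2::nat)^J. \<bar>rademacher_sum J c i\<bar> powr p) \<le> C * 2^J * sqrt (\<Sum>k<J. (c k)^2) powr p"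
    for J c
  proof (cases "(\<Sum>k<J. (c k)^2) = 0")
    case True
    then show ?thesis by (simp add: rademacher_sum_eq_zero)
  next
    case False
    define f where "f = rademacher_sum J c"
    define s where "s = sqrt (\<Sum>k<J. (c k)^2)"
    have "s > 0" using False by (simp add: s_def sum_nonneg order_neq_le_trans)
    have exp_moment: "(\<Sum>i<(2::nat)^J. exp (t * f i)) \<le> 2^J * exp (1/2)" if "t^2 * s^2 = 1" for t
      using sum_exp_rademacher_sum_le[of t J c] that by (simp add: f_def s_def sum_nonneg)
    have pointwise: "\<bar>f i\<bar> powr p \<le> s powr p * K * (exp ((1/s) * f i) + exp ((-1/s) * f i))" for i
    proof -
      have "\<bar>f i\<bar> powr p = s powr p * \<bar>f i / s\<bar> powr p"
        using \<open>s > 0\<close> by (simp add: abs_divide powr_divide)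
      also have "\<bar>f i / s\<bar> powr p \<le> K * exp \<bar>f i / s\<bar>" by (rule K(2)) simp
      also have "exp \<bar>f i / s\<bar> \<le> exp ((1/s) * f i) + exp ((-1/s) * f i)"
        by (cases "f i \<ge> 0") (auto simp: abs_if add_increasing add_increasing2)
      finally show ?thesis using \<open>s > 0\<close> K by (simp add: mult.assoc mult_left_mono)
    qed
    have "(\<Sum>i<(2::nat)^J. \<bar>f i\<bar> powr p)
        \<le> (\<Sum>i<(2::nat)^J. s powr p * K * (exp ((1/s) * f i) + exp ((-1/s) * f i)))"
      by (intro sum_mono pointwise)
    also have "\<dots> = s powr p * K * ((\<Sum>i<(2::nat)^J. exp ((1/s) * f i)) + (\<Sum>i<(2::nat)^J. exp ((-1/s) * f i)))"
      unfolding sum.distrib[symmetric] sum_distrib_left by (rule refl)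
    also have "\<dots> \<le> s powr p * K * (2^J * exp (1/2) + 2^J * exp (1/2))"
      using \<open>s > 0\<close> K by (intro mult_left_mono add_mono exp_moment) (auto simp: power_divide)
    also have "\<dots> = C * 2^J * s powr p" by (simp add: C_def)
    finally show ?thesis by (simp add: f_def s_def)
  qed
  moreover have "C > 0" using K by (simp add: C_def)
  ultimately show ?thesis using that by blast
qed

lemma le_three_regimes:
  fixes a t M q :: real
  assumes "a \<ge> 0" "t > 0" "M > 0" "q > 0"
  shows "a \<le> t + M / t powr q * a powr q + a^2 / M"
proof -
  have "M / t powr q * a powr q \<ge> 0" "a^2 / M \<ge> 0" using assms by simp_all
  consider "a < t" | "t \<le> a" "a \<le> M" | "M < a" by linarith
  then show ?thesis
  proof cases
    case 2
    have "t powr q \<le> a powr q" using 2 assms by (intro powr_mono2) auto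
    then have "M \<le> M / t powr q * a powr q" using assms by (simp add: field_simps)
    then show ?thesis using 2 \<open>a^2 / M \<ge> 0\<close> assms by linarith
  next
    case 3
    then have "a \<le> a^2 / M" using assms by (simp add: field_simps power2_eq_square mult_right_mono)
    then show ?thesis using \<open>M / t powr q * a powr q \<ge> 0\<close> assms by linarith
  qed (use \<open>M / t powr q * a powr q \<ge> 0\<close> \<open>a^2 / M \<ge> 0\<close> in linarith)
qed

text \<open>The second moment is bounded by the p-th moment and the fourth moment, by splitting
  according to le_three_regimes at t = s^2/2 and M = 4 C s^2.\<close>
lemma sum_abs_powr_ge_of_moments:
  fixes f :: "'a \<Rightarrow> real" and p C s :: real
  assumes "p > 0" "C > 0" "s > 0"
    and second: "(\<Sum>i\<in>I. (f i)^2) = card I * s^2"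
    and fourth: "(\<Sum>i\<in>I. ((f i)^2)^2) \<le> C * card I * s^4"
  shows "(1/2) powr (p/2) / (16 * C) * card I * s powr p \<le> (\<Sum>i\<in>I. \<bar>f i\<bar> powr p)"
proof -
  define t where "t = s^2 / 2"
  define M where "M = 4 * C * s^2"
  have "t > 0" "M > 0" using assms by (auto simp: t_def M_def)
  define N :: real where "N = card I"
  define S where "S = (\<Sum>i\<in>I. \<bar>f i\<bar> powr p)"
  have abs_powr: "\<bar>y\<bar> powr p = (y^2) powr (p/2)" for y :: real
    by (metis divide_inverse mult_1 powr_powr powr_powr_swap square_powr_half)
  have "N * s^2 \<le> (\<Sum>i\<in>I. t + M / t powr (p/2) * \<bar>f i\<bar> powr p + ((f i)^2)^2 / M)"
    unfolding N_def second[symmetric] abs_powr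
    using assms \<open>t > 0\<close> \<open>M > 0\<close> by (intro sum_mono le_three_regimes) auto
  also have "\<dots> = N * t + M / t powr (p/2) * S + (\<Sum>i\<in>I. ((f i)^2)^2) / M"
    by (simp add: sum.distrib sum_distrib_left sum_divide_distrib S_def N_def)
  also have "\<dots> \<le> N * t + M / t powr (p/2) * S + C * N * s^4 / M"
    using fourth \<open>M > 0\<close> by (intro add_left_mono divide_right_mono) (auto simp: N_def)
  also have "C * N * s^4 / M = N * s^2 / 4"
    using assms by (simp add: M_def field_simps power2_eq_square power4_eq_xxxx)
  finally have "N * s^2 / 4 * t powr (p/2) / M \<le> S"
    using \<open>t > 0\<close> \<open>M > 0\<close> by (simp add: t_def field_simps)
  moreover have "t powr (p/2) = s powr p * (1/2) powr (p/2)"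
    using powr_mult[of "s^2" "1/2" "p/2"] abs_powr[of s] \<open>s > 0\<close> by (simp add: t_def)
  ultimately show ?thesis
    using assms by (simp add: M_def N_def S_def field_simps power2_eq_square)
qed

text \<open>Khintchine's lower inequality, deduced from the upper one for p = 4.\<close>
lemma khintchine_lower:
  fixes p :: real
  assumes "p > 0"
  obtains L where "L > 0"
    "\<And>J c. L * 2^J * sqrt (\<Sum>k<J. (c k)^2) powr p
              \<le> (\<Sum>i<(2::nat)^J. \<bar>rademacher_sum J c i\<bar> powr p)"
proof -
  obtain C where C: "C > 0" "\<And>J c. (\<Sum>i<(2::nat)^J. \<bar>rademacher_sum J c i\<bar> powr 4)
              \<le> C * 2^J * sqrt (\<Sum>k<J. (c k)^2) powr 4"
    using khintchine_upper[of 4] by auto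
  define L where "L = (1/2) powr (p/2) / (16 * C)"
  have "L * 2^J * sqrt (\<Sum>k<J. (c k)^2) powr p \<le> (\<Sum>i<(2::nat)^J. \<bar>rademacher_sum J c i\<bar> powr p)"
    for J c
  proof (cases "(\<Sum>k<J. (c k)^2) = 0")
    case True
    then show ?thesis by (simp add: sum_nonneg)
  next
    case False
    define s where "s = sqrt (\<Sum>k<J. (c k)^2)"
    have "s > 0" using False by (simp add: s_def sum_nonneg order_neq_le_trans)
    have "(\<Sum>i<(2::nat)^J. (rademacher_sum J c i)^2) = card {..<(2::nat)^J} * s^2"
      using sum_rademacher_sum_squared[of J c] by (simp add: s_def sum_nonneg)
    moreover have "(\<Sum>i<(2::nat)^J. ((rademacher_sum J c i)^2)^2) \<le> C * card {..<(2::nat)^J} * s^4"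
      using C(2)[of J c] \<open>s > 0\<close> by (simp add: s_def powr_numeral)
    ultimately have "L * card {..<(2::nat)^J} * s powr p \<le> (\<Sum>i<(2::nat)^J. \<bar>rademacher_sum J c i\<bar> powr p)"
      unfolding L_def by (rule sum_abs_powr_ge_of_moments[OF assms C(1) \<open>s > 0\<close>])
    then show ?thesis by (simp add: s_def)
  qed
  then show ?thesis using C(1) by (intro that[of L]) (simp_all add: L_def)
qed

lemma real_of_ereal_gt_0: "0 < (p::ereal) \<Longrightarrow> p \<noteq> \<infinity> \<Longrightarrow> 0 < real_of_ereal p"
  by (cases p) auto

lemma block_norm_cong:
  assumes "\<And>i. i < 2^j \<Longrightarrow> y i = z i"
  shows "block_norm p j y = block_norm p j z"
proof -
  have "(\<lambda>i. \<bar>y i\<bar>) ` {..<2^j} = (\<lambda>i. \<bar>z i\<bar>) ` {..<2^j}"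
    using assms by (intro image_cong) auto
  moreover have "(\<Sum>i<2^j. \<bar>y i\<bar> powr real_of_ereal p) = (\<Sum>i<2^j. \<bar>z i\<bar> powr real_of_ereal p)"
    using assms by (intro sum.cong) auto
  ultimately show ?thesis by (simp add: block_norm_def lp_norm_def)
qed

lemma block_norm_nonneg: "0 \<le> block_norm p j y"
proof -
  have "0 \<le> Max (insert 0 ((\<lambda>i. \<bar>y i\<bar>) ` {..<2^j}))"
    by (rule Max_ge) auto
  then have "0 \<le> lp_norm p (2^j) y" by (simp add: lp_norm_def)
  then show ?thesis by (simp add: block_norm_def)
qed

lemma block_norm_zero: "0 < p \<Longrightarrow> block_norm p j (\<lambda>i. 0) = 0"
proof (cases "p = \<infinity>")
  case True
  have "(\<lambda>i. \<bar>0::real\<bar>) ` {..<(2::nat)^j} = {0}" by (auto intro!: image_eqI[where x=0])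
  then show ?thesis using True by (simp add: block_norm_def lp_norm_def)
next
  case False
  assume "0 < p"
  then show ?thesis using False real_of_ereal_gt_0 by (simp add: block_norm_def lp_norm_def)
qed

lemma block_norm_eq_powr_mean:
  assumes "p \<noteq> \<infinity>"
  shows "block_norm p J y
    = ((\<Sum>i<(2::nat)^J. \<bar>y i\<bar> powr real_of_ereal p) / 2^J) powr (1 / real_of_ereal p)"
proof -
  define P where "P = real_of_ereal p"
  define S where "S = (\<Sum>i<(2::nat)^J. \<bar>y i\<bar> powr P)"
  have "S \<ge> 0" by (simp add: S_def sum_nonneg)
  have "(S / 2^J) powr (1/P) = S powr (1/P) / (2 powr real J) powr (1/P)"
    using \<open>S \<ge> 0\<close> by (simp add: powr_divide powr_realpow)
  also have "\<dots> = 2 powr (- real J / P) * S powr (1/P)"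
    by (simp add: powr_powr powr_minus divide_inverse mult.commute)
  finally show ?thesis using assms
    by (simp add: block_norm_def lp_norm_def S_def P_def powr_realpow)
qed

lemma mult_powr_powr_inverse:
  fixes K s P :: real
  assumes "K \<ge> 0" "s \<ge> 0" "P > 0"
  shows "(K * s powr P) powr (1/P) = K powr (1/P) * s"
  using assms by (simp add: powr_mult powr_powr)

lemma block_norm_rademacher_sum_ge:
  assumes "0 < p" "p \<noteq> \<infinity>"
  obtains a where "a > 0"
    "\<And>J c. a * sqrt (\<Sum>k<J. (c k)^2) \<le> block_norm p J (rademacher_sum J c)"
proof -
  define P where "P = real_of_ereal p"
  have "P > 0" unfolding P_def using assms by (rule real_of_ereal_gt_0)
  obtain L where L: "L > 0" "\<And>J c. L * 2^J * sqrt (\<Sum>k<J. (c k)^2) powr P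
              \<le> (\<Sum>i<(2::nat)^J. \<bar>rademacher_sum J c i\<bar> powr P)"
    using khintchine_lower[OF \<open>P > 0\<close>] by blast
  have "L powr (1/P) * sqrt (\<Sum>k<J. (c k)^2) \<le> block_norm p J (rademacher_sum J c)" for J c
  proof -
    have "L powr (1/P) * sqrt (\<Sum>k<J. (c k)^2) = (L * sqrt (\<Sum>k<J. (c k)^2) powr P) powr (1/P)"
      using L(1) \<open>P > 0\<close> by (simp add: mult_powr_powr_inverse sum_nonneg)
    also have "\<dots> \<le> ((\<Sum>i<(2::nat)^J. \<bar>rademacher_sum J c i\<bar> powr P) / 2^J) powr (1/P)"
      using L \<open>P > 0\<close> by (intro powr_mono2) (auto simp: field_simps)
    finally show ?thesis using assms(2) by (simp add: block_norm_eq_powr_mean P_def)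
  qed
  then show ?thesis using L(1) by (intro that[of "L powr (1/P)"]) auto
qed

lemma block_norm_rademacher_sum_le:
  assumes "0 < p" "p \<noteq> \<infinity>"
  obtains b where "b > 0"
    "\<And>J c. block_norm p J (rademacher_sum J c) \<le> b * sqrt (\<Sum>k<J. (c k)^2)"
proof -
  define P where "P = real_of_ereal p"
  have "P > 0" unfolding P_def using assms by (rule real_of_ereal_gt_0)
  obtain C where C: "C > 0" "\<And>J c. (\<Sum>i<(2::nat)^J. \<bar>rademacher_sum J c i\<bar> powr P)
              \<le> C * 2^J * sqrt (\<Sum>k<J. (c k)^2) powr P"
    using khintchine_upper[OF \<open>P > 0\<close>] by blast
  have "block_norm p J (rademacher_sum J c) \<le> C powr (1/P) * sqrt (\<Sum>k<J. (c k)^2)" for J c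
  proof -
    have "block_norm p J (rademacher_sum J c)
        = ((\<Sum>i<(2::nat)^J. \<bar>rademacher_sum J c i\<bar> powr P) / 2^J) powr (1/P)"
      using assms(2) by (simp add: block_norm_eq_powr_mean P_def)
    also have "\<dots> \<le> (C * sqrt (\<Sum>k<J. (c k)^2) powr P) powr (1/P)"
      using C \<open>P > 0\<close> by (intro powr_mono2) (auto simp: field_simps sum_nonneg)
    also have "\<dots> = C powr (1/P) * sqrt (\<Sum>k<J. (c k)^2)"
      using C(1) \<open>P > 0\<close> by (simp add: mult_powr_powr_inverse sum_nonneg)
    finally show ?thesis .
  qed
  then show ?thesis using C(1) by (intro that[of "C powr (1/P)"]) auto
qed

lemma block_norm_rademacher_sum_comparable:
  assumes "0 < p0" "p0 \<noteq> \<infinity>" "0 < p1" "p1 \<noteq> \<infinity>"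
  obtains c0 :: real where "c0 > 0"
    "\<And>J c. c0 * block_norm p0 J (rademacher_sum J c) \<le> block_norm p1 J (rademacher_sum J c)"
proof -
  obtain b where "b > 0"
    and upper: "\<And>J c. block_norm p0 J (rademacher_sum J c) \<le> b * sqrt (\<Sum>k<J. (c k)^2)"
    using block_norm_rademacher_sum_le[OF assms(1,2)] by metis
  obtain a where "a > 0"
    and lower: "\<And>J c. a * sqrt (\<Sum>k<J. (c k)^2) \<le> block_norm p1 J (rademacher_sum J c)"
    using block_norm_rademacher_sum_ge[OF assms(3,4)] by metis
  have "a / b * block_norm p0 J (rademacher_sum J c) \<le> block_norm p1 J (rademacher_sum J c)" for J c
  proof -
    have "a / b * block_norm p0 J (rademacher_sum J c) \<le> a / b * (b * sqrt (\<Sum>k<J. (c k)^2))"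
      using \<open>a > 0\<close> \<open>b > 0\<close> upper by (intro mult_left_mono) auto
    also have "\<dots> = a * sqrt (\<Sum>k<J. (c k)^2)" using \<open>b > 0\<close> by simp
    finally show ?thesis using lower[where J=J and c=c] by linarith
  qed
  then show ?thesis using \<open>a > 0\<close> \<open>b > 0\<close> by (intro that[of "a / b"]) auto
qed

definition single_block :: "nat \<Rightarrow> (nat \<Rightarrow> real) \<Rightarrow> nat \<Rightarrow> nat \<Rightarrow> real" where
  "single_block J y = (\<lambda>j i. if j = J \<and> i < 2^J then y i else 0)"

lemma block_norm_single_block:
  assumes "0 < p"
  shows "block_norm p j (single_block J y j) = (if j = J then block_norm p J y else 0)"
proof (cases "j = J")
  case True
  then show ?thesis by (simp add: single_block_def, intro block_norm_cong) auto
next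
  case False
  then have "single_block J y j = (\<lambda>i. 0)" by (simp add: single_block_def fun_eq_iff)
  then show ?thesis using False block_norm_zero[OF assms] by simp
qed

lemma mixed_norm_single_block:
  assumes "A \<le> J" "0 < p" "0 < q"
  shows "single_block J y \<in> mixed_space p q A"
    and "mixed_norm p q A (single_block J y) = ereal (block_norm p J y)"
proof -
  define b where "b = block_norm p J y"
  have "b \<ge> 0" by (simp add: b_def block_norm_nonneg)
  have support: "\<forall>j i. (j < A \<or> 2 ^ j \<le> i) \<longrightarrow> single_block J y j i = 0"
    using assms(1) by (auto simp: single_block_def)
  have "single_block J y \<in> mixed_space p q A \<and> mixed_norm p q A (single_block J y) = ereal b"
  proof (cases "q = \<infinity>")
    case True
    define T where "T = {block_norm p j (single_block J y j) | j. A \<le> j}"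
    have "T \<subseteq> {0, b}" using block_norm_single_block[OF assms(2)] by (auto simp: T_def b_def)
    moreover have "b \<in> T"
      unfolding T_def b_def using assms(1) block_norm_single_block[OF assms(2), of J J y] by force
    ultimately have "bdd_above T" "Sup T = b"
      using \<open>b \<ge> 0\<close> by (auto intro: bdd_above_mono[of _ "{0, b}"] cSup_eq_maximum)
    moreover have "single_block J y \<in> mixed_space p q A"
      using support \<open>bdd_above T\<close> True by (simp add: mixed_space_def T_def)
    ultimately show ?thesis using True by (simp add: mixed_norm_def T_def)
  next
    case False
    define Q where "Q = real_of_ereal q"
    have "Q > 0" unfolding Q_def using assms(3) False by (rule real_of_ereal_gt_0)
    have "(\<lambda>j. block_norm p (j + A) (single_block J y (j + A)) powr Q)
        = (\<lambda>j. if j = J - A then b powr Q else 0)"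
      using assms(1) \<open>Q > 0\<close> by (auto simp: fun_eq_iff block_norm_single_block[OF assms(2)] b_def)
    then have sums: "(\<lambda>j. block_norm p (j + A) (single_block J y (j + A)) powr Q) sums (b powr Q)"
      using sums_single[of "J - A" "\<lambda>_. b powr Q"] by simp
    moreover have "(b powr Q) powr (1/Q) = b" using \<open>Q > 0\<close> \<open>b \<ge> 0\<close> by (simp add: powr_powr)
    moreover have "single_block J y \<in> mixed_space p q A"
      using support False sums by (auto simp: mixed_space_def Q_def sums_iff)
    ultimately show ?thesis using False sums by (simp add: mixed_norm_def sums_iff Q_def)
  qed
  then show "single_block J y \<in> mixed_space p q A"
    and "mixed_norm p q A (single_block J y) = ereal (block_norm p J y)"
    by (simp_all add: b_def)
qed

lemma sum_mult_single_block_rademacher: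
  assumes "n \<le> J"
  shows "(\<lambda>j i. \<Sum>k<n. c k * single_block J (rademacher k) j i)
    = single_block J (rademacher_sum J (\<lambda>k. if k < n then c k else 0))"
proof (intro ext)
  fix j i
  show "(\<Sum>k<n. c k * single_block J (rademacher k) j i)
      = single_block J (rademacher_sum J (\<lambda>k. if k < n then c k else 0)) j i"
  proof (cases "j = J \<and> i < 2^J")
    case True
    have "(\<Sum>k<J. (if k < n then c k else 0) * rademacher k i) = (\<Sum>k<n. c k * rademacher k i)"
      using assms by (intro sum.mono_neutral_cong_right) auto
    then show ?thesis using True by (simp add: single_block_def rademacher_sum_def)
  next
    case False
    then show ?thesis by (simp add: single_block_def if_not_P[OF False])
  qed
qed

lemma lin_subspace_dim_single_block_rademacher:
  assumes "n \<le> J"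
  shows "lin_subspace_dim {(\<lambda>j i. \<Sum>k<n. c k * single_block J (rademacher k) j i) | c. True} n"
  unfolding lin_subspace_dim_def
proof (intro exI[of _ "\<lambda>k. single_block J (rademacher k)"] conjI allI impI refl)
  fix c k assume zero: "\<forall>j i. (\<Sum>k<n. c k * single_block J (rademacher k) j i) = 0" and "k < n"
  define c' where "c' k = (if k < n then c k else 0)" for k
  have "rademacher_sum J c' i = 0" if "i < 2^J" for i
  proof -
    have "rademacher_sum J c' i = single_block J (rademacher_sum J c') J i"
      using that by (simp add: single_block_def)
    also have "\<dots> = 0"
      using zero fun_cong[OF fun_cong[OF sum_mult_single_block_rademacher[OF assms, of c]]]
      unfolding c'_def by metis
    finally show ?thesis .
  qed
  then have "c' k = 0"
    using \<open>k < n\<close> assms by (intro rademacher_sum_vanishes_imp_coeffs_zero[of J c']) auto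
  then show "c k = 0" using \<open>k < n\<close> by (simp add: c'_def)
qed

lemma bernstein_ge_of_rademacher_comparable:
  assumes "0 < p0" "0 < q0" "0 < p1" "0 < q1"
    and comparable: "\<And>J c. c0 * block_norm p0 J (rademacher_sum J c) \<le> block_norm p1 J (rademacher_sum J c)"
  shows "ereal c0 \<le> bernstein (mixed_space p0 q0 A) (mixed_norm p0 q0 A) (mixed_norm p1 q1 A) (\<lambda>x. x) n"
proof -
  define J where "J = n + A"
  have "A \<le> J" "n \<le> J" by (simp_all add: J_def)
  define X where "X = {(\<lambda>j i. \<Sum>k<n. c k * single_block J (rademacher k) j i) | c. True}"
  have X_elem: "x \<in> X \<Longrightarrow> \<exists>c. x = single_block J (rademacher_sum J c)" for x
    using sum_mult_single_block_rademacher[OF \<open>n \<le> J\<close>] by (auto simp: X_def)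
  have "lin_subspace_dim X n"
    unfolding X_def using \<open>n \<le> J\<close> by (rule lin_subspace_dim_single_block_rademacher)
  moreover have "X \<subseteq> mixed_space p0 q0 A"
    using X_elem mixed_norm_single_block(1)[OF \<open>A \<le> J\<close> assms(1,2)] by blast
  moreover have "ereal c0 \<le> (INF x \<in> {x \<in> X. mixed_norm p0 q0 A x = 1}. mixed_norm p1 q1 A x)"
  proof (rule INF_greatest)
    fix x assume "x \<in> {x \<in> X. mixed_norm p0 q0 A x = 1}"
    then obtain c where x: "x = single_block J (rademacher_sum J c)" and "mixed_norm p0 q0 A x = 1"
      using X_elem by blast
    then have "block_norm p0 J (rademacher_sum J c) = 1"
      using mixed_norm_single_block(2)[OF \<open>A \<le> J\<close> assms(1,2)] by (simp add: one_ereal_def)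
    then show "ereal c0 \<le> mixed_norm p1 q1 A x"
      using comparable[of J c] mixed_norm_single_block(2)[OF \<open>A \<le> J\<close> assms(3,4)] x by simp
  qed
  ultimately show ?thesis
    unfolding bernstein_def by (intro SUP_upper2[of X]) auto
qed

theorem proposition3p8:
  fixes p0 p1 q0 q1 :: ereal and A :: nat
  assumes "0 < p1" and "p1 \<le> p0"
    and "0 < q0" and "q0 < q1"
    and "\<not> (p0 = \<infinity> \<and> p1 < \<infinity>)"
  shows "\<not> finitely_strictly_singular (mixed_space p0 q0 A) (mixed_norm p0 q0 A)
            (mixed_norm p1 q1 A) (\<lambda>x. x)"
proof
  obtain c0 :: real where "c0 > 0"
    and comparable: "\<And>J c. c0 * block_norm p0 J (rademacher_sum J c) \<le> block_norm p1 J (rademacher_sum J c)"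
  proof (cases "p1 = p0")
    case True
    then show ?thesis using that[of 1] by simp
  next
    case False
    with assms have "0 < p0" "p0 \<noteq> \<infinity>" "p1 \<noteq> \<infinity>" by auto
    then show ?thesis using that block_norm_rademacher_sum_comparable assms(1) by metis
  qed
  assume "finitely_strictly_singular (mixed_space p0 q0 A) (mixed_norm p0 q0 A) (mixed_norm p1 q1 A) (\<lambda>x. x)"
  then have "eventually (\<lambda>n. bernstein (mixed_space p0 q0 A) (mixed_norm p0 q0 A)
      (mixed_norm p1 q1 A) (\<lambda>x. x) n < ereal c0) sequentially"
    using \<open>c0 > 0\<close> unfolding finitely_strictly_singular_def by (intro order_tendstoD(2)) auto
  then obtain n where "bernstein (mixed_space p0 q0 A) (mixed_norm p0 q0 A)
      (mixed_norm p1 q1 A) (\<lambda>x. x) n < ereal c0"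
    by (auto simp: eventually_sequentially)
  moreover have "0 < p0" "0 < q1" using assms by auto
  ultimately show False
    using bernstein_ge_of_rademacher_comparable[OF _ assms(3,1) _ comparable, of q1 A n] by simp
qed

end
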